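(* Consider the market and VCG mechanism described in the context, with the aggregate-dependence assumption. Fix a bidder $l\in L$ with true cost $c_l:\mathcal X_l\to\mathbb{R}_+$, and arbitrary fixed bids $\mathcal{C}_{-l}=\{c_j\}_{j\in L\setminus\{l\}}$ of the other bidders (not necessarily truthful); let $\mathcal{C}=(\mathcal{C}_{-l},c_l)$. Suppose bidder $l$ instead participates under a finite set $S$ of identities (disjoint from $L$) with bids $\mathcal{B}_S=\{b_k\}_{k\in S}$, $b_k:\hat{\mathcal X}_k\to\mathbb{R}_+$, $0\in\hat{\mathcal X}_k$, $b_k(0)=0$, where $\sum_{k\in S}\hat{\mathcal X}_k\subseteq\mathcal X_l$ (Minkowski sum). Let $\mathcal{B}=(\mathcal{C}_{-l},\mathcal{B}_S)$ be the resulting profile on the bidder set $L'=(L\setminus\{l\})\cup S$, and let $\gamma>0$ be a weak-supermodularity constant of the market objective on $L'$. Then bidder $l$'s total utility from shill bidding, $$U_{\mathrm{shill}}=\sum_{k\in S}p_k(\mathcal{B})-c_l\Big(\sum_{k\in S}x^*_k(\mathcal{B})\Big),$$ satisfies $$U_{\mathrm{shill}}\le u_l(\mathcal{C})+\big[\gamma^{-1}-1\big]\big[J(\mathcal{C}_{-l})-J(\mathcal{C}_{-l},\mathcal{B}_S)\big]\le u_l(\mathcal{C})+\big[\gamma^{-1}-1\big]\big[J(\mathcal{C}_{-l})-J(\mathcal{C}_{-l},\mathcal{B}^0_l)\big],$$ where $u_l(\mathcal{C})$ is bidder $l$'s VCG utility when bidding the single truthful bid $c_l$, $J(\mathcal{C}_{-l})$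 is the objective with bidder $l$ removed, and $\mathcal{B}^0_l$ is the single bid $b_l(x_l)=0$ for all $x_l\in\mathcal X_l$.
   Context: Market model. For a finite bidder set $N$ and $t\ge1$ types of supply, bidder $j\in N$ submits a bid function $b_j:\hat{\mathcal X}_j\to\mathbb{R}_+$ with $0\in\hat{\mathcal X}_j\subseteq\mathbb{R}^t_+$, $b_j(0)=0$; a bid profile is $\mathcal{B}=\{b_j\}_{j\in N}$. Aggregate-dependence assumption (same supply types from different bidders are perfect substitutes): there are fixed functions $\bar d:\mathbb{R}^t_+\times\mathbb{R}^p\to\mathbb{R}$ and $\bar g:\mathbb{R}^t_+\times\mathbb{R}^p\to\mathbb{R}^q$, and for any bidder set the cost term and constraints are $d(x,y)=\bar d(\sum_j x_j,y)$, $g(x,y)=\bar g(\sum_j x_j,y)$. For $S\subseteq N$, $$J(\mathcal{B}_S)=\min\Big\{\sum_{j\in S}b_j(x_j)+d(x,y):\ x\in\textstyle\prod_{j\in N}\hat{\mathcal X}_j,\ y\in\mathbb{R}^p,\ g(x,y)\le0,\ x_j=0\ \forall j\notin S\Big\},$$ with value $+\infty$ if infeasible (minima assumed attained when finite). Write $J(\mathcal{B})=J(\mathcal{B}_N)$ and $J(\mathcal{B}_{-K})=J(\mathcal{B}_{N\setminus K})$. $(x^*(\mathcal{B}),y^*(\mathcal{B}))$ denotes the minimizer for $S=N$ chosen by a fixed tie-breaking rule. Standing assumption: for every profile considered, $J(\mathcal{B})<\infty$ and $J(\mathcal{B}_{-j})<\infty$ for every bidder $j$. VCG mechanism (Clarke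 pivot): $p_j(\mathcal{B})=b_j(x^*_j(\mathcal{B}))+J(\mathcal{B}_{-j})-J(\mathcal{B})$; the utility of a bidder $j$ with true cost $c_j$ is $u_j(\mathcal{B})=p_j(\mathcal{B})-c_j(x^*_j(\mathcal{B}))$. Weak-supermodularity constant on bidder set $N$: $\gamma>0$ such that for every bid profile $\mathcal{B}$ on $N$ and all $K,S\subseteq N$ with $J(\mathcal{B}_{S\setminus K})<\infty$, $$\gamma\sum_{j\in K}\big[J(\mathcal{B}_{S\setminus\{j\}})-J(\mathcal{B}_S)\big]\le J(\mathcal{B}_{S\setminus K})-J(\mathcal{B}_S).$$ (The largest such $\gamma$ is the supermodularity ratio $\gamma_{\sup}$; the objective is weakly supermodular if $\gamma_{\sup}>0$.) *)

theory Defs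
  imports "HOL-Analysis.Analysis"
begin

text \<open>Supply vectors live in real^'t, auxiliary variables y in real^'p,
 constraint values in real^'q. Under the aggregate-dependence assumption the
 cost term and the constraints are dbar (sum of allocations) y and
 gbar (sum of allocations) y. A bid profile on a bidder set N is given by
 domains Xh j and bid functions b j (only their values on Xh j matter).\<close>

definition feasible ::
  "(real^'t \<Rightarrow> real^'p \<Rightarrow> real^'q) \<Rightarrow> 'b set \<Rightarrow> ('b \<Rightarrow> (real^'t) set)
    \<Rightarrow> 'b set \<Rightarrow> ('b \<Rightarrow> real^'t) \<Rightarrow> real^'p \<Rightarrow> bool" where
  "feasible gbar N Xh S x y \<longleftrightarrow>
     (\<forall>j\<in>N. x j \<in> Xh j) \<and> (\<forall>j. j \<notin> S \<longrightarrow> x j = 0) \<and>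
     (\<forall>i. gbar (\<Sum>j\<in>N. x j) y $ i \<le> 0)"

definition objective ::
  "(real^'t \<Rightarrow> real^'p \<Rightarrow> real) \<Rightarrow> 'b set \<Rightarrow> ('b \<Rightarrow> real^'t \<Rightarrow> real)
    \<Rightarrow> 'b set \<Rightarrow> ('b \<Rightarrow> real^'t) \<Rightarrow> real^'p \<Rightarrow> real" where
  "objective dbar N b S x y = (\<Sum>j\<in>S. b j (x j)) + dbar (\<Sum>j\<in>N. x j) y"

text \<open>J(B_S) on bidder set N; +infinity if infeasible.\<close>
definition J ::
  "(real^'t \<Rightarrow> real^'p \<Rightarrow> real) \<Rightarrow> (real^'t \<Rightarrow> real^'p \<Rightarrow> real^'q) \<Rightarrow> 'b set
    \<Rightarrow> ('b \<Rightarrow> (real^'t) set) \<Rightarrow> ('b \<Rightarrow> real^'t \<Rightarrow> real) \<Rightarrow> 'b set \<Rightarrow> ereal" where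
  "J dbar gbar N Xh b S =
     Inf {ereal (objective dbar N b S x y) | x y. feasible gbar N Xh S x y}"

definition attained where
  "attained dbar gbar N Xh b S \<longleftrightarrow>
     (J dbar gbar N Xh b S < \<infinity> \<longrightarrow>
       (\<exists>x y. feasible gbar N Xh S x y \<and>
              ereal (objective dbar N b S x y) = J dbar gbar N Xh b S))"

definition all_attained where
  "all_attained dbar gbar N Xh b \<longleftrightarrow> (\<forall>S\<subseteq>N. attained dbar gbar N Xh b S)"

definition valid_profile :: "'b set \<Rightarrow> ('b \<Rightarrow> (real^'t) set) \<Rightarrow> ('b \<Rightarrow> real^'t \<Rightarrow> real) \<Rightarrow> bool" where
  "valid_profile N Xh b \<longleftrightarrow>
     (\<forall>j\<in>N. 0 \<in> Xh j \<and> (\<forall>x\<in>Xh j. \<forall>i. 0 \<le> x $ i) \<and> b j 0 = 0 \<and>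
            (\<forall>x\<in>Xh j. 0 \<le> b j x))"

definition standing where
  "standing dbar gbar N Xh b \<longleftrightarrow>
     J dbar gbar N Xh b N < \<infinity> \<and> (\<forall>j\<in>N. J dbar gbar N Xh b (N - {j}) < \<infinity>)"

definition is_minimizer where
  "is_minimizer dbar gbar N Xh b x y \<longleftrightarrow>
     feasible gbar N Xh N x y \<and> ereal (objective dbar N b N x y) = J dbar gbar N Xh b N"

definition vcg_payment where
  "vcg_payment dbar gbar N Xh b x j =
     b j (x j) + real_of_ereal (J dbar gbar N Xh b (N - {j})) - real_of_ereal (J dbar gbar N Xh b N)"

definition wsm_const ::
  "(real^'t \<Rightarrow> real^'p \<Rightarrow> real) \<Rightarrow> (real^'t \<Rightarrow> real^'p \<Rightarrow> real^'q) \<Rightarrow> 'b set \<Rightarrow> real \<Rightarrow> bool" where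
  "wsm_const dbar gbar N \<gamma> \<longleftrightarrow> 0 < \<gamma> \<and>
     (\<forall>Xh b. valid_profile N Xh b \<and> all_attained dbar gbar N Xh b \<longrightarrow>
        (\<forall>K S. K \<subseteq> N \<and> S \<subseteq> N \<and> J dbar gbar N Xh b (S - K) < \<infinity> \<longrightarrow>
           ereal \<gamma> * (\<Sum>j\<in>K. J dbar gbar N Xh b (S - {j}) - J dbar gbar N Xh b S)
             \<le> J dbar gbar N Xh b (S - K) - J dbar gbar N Xh b S))"

end

theory Submission
  imports Defs
begin

text \<open>
  The VCG payment to a shill identity k is its bid plus its marginal contribution
  J(B_{-k}) - J(B). Weak supermodularity with K = S bounds the sum of these contributions by
  (J(C_{-l}) - J(B)) / \<gamma>, since removing all identities leaves the market J(C_{-l}).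
  Merging the identities' allocations into one allocation for l is feasible (Minkowski-sum
  condition) and keeps the aggregate supply, so J(C) \<le> J(B) - \<Sum>b_k(x_k) + c_l(\<Sum>x_k);
  these two facts give the first inequality.

  For the second, the same merging with a zero bid gives J(C_{-l}, B^0_l) \<le> J(B), which settles
  \<gamma> \<le> 1. For \<gamma> > 1, let one identity stand in for l and make the others null: this replicates
  every bid profile on L inside L', so \<gamma> is a weak-supermodularity constant on L as well, and a
  constant above 1 means removing a bidder cannot raise J. Hence
  J(B) \<le> J(C_{-l}) \<le> J(C_{-l}, B^0_l).
\<close>

text \<open>J is the infimum of this set and attainment is membership of J in it, so equal value sets
  give equal J and equal attainment.\<close>

definition objective_values ::
  "(real^'t \<Rightarrow> real^'p \<Rightarrow> real) \<Rightarrow> (real^'t \<Rightarrow> real^'p \<Rightarrow> real^'q) \<Rightarrow> 'b set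
    \<Rightarrow> ('b \<Rightarrow> (real^'t) set) \<Rightarrow> ('b \<Rightarrow> real^'t \<Rightarrow> real) \<Rightarrow> 'b set \<Rightarrow> real set" where
  "objective_values d g N X b T = {objective d N b T x y | x y. feasible g N X T x y}"

lemma image_ereal_objective_values:
  "ereal ` objective_values d g N X b T = {ereal (objective d N b T x y) | x y. feasible g N X T x y}"
  unfolding objective_values_def by blast

lemma J_eq_Inf_objective_values:
  "J d g N X b T = Inf (ereal ` objective_values d g N X b T)"
  unfolding J_def image_ereal_objective_values ..

lemma attained_iff_objective_values:
  "attained d g N X b T \<longleftrightarrow>
     (J d g N X b T < \<infinity> \<longrightarrow> J d g N X b T \<in> ereal ` objective_values d g N X b T)"
  unfolding attained_def image_ereal_objective_values by (auto; metis)

lemma J_le_objective: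
  "feasible g N X T x y \<Longrightarrow> J d g N X b T \<le> ereal (objective d N b T x y)"
  unfolding J_def by (rule Inf_lower) blast

lemma objective_values_eqI:
  assumes "\<And>x y. feasible g N X T x y \<longleftrightarrow> feasible g N' X' T' x y"
    and "\<And>x y. feasible g N X T x y \<Longrightarrow> objective d N b T x y = objective d N' b' T' x y"
  shows "objective_values d g N X b T = objective_values d g N' X' b' T'"
  unfolding objective_values_def using assms by metis

lemma objective_values_cong:
  assumes "\<forall>j\<in>N. X j = X' j" and "\<forall>j\<in>T. b j = b' j"
  shows "objective_values d g N X b T = objective_values d g N X' b' T"
  using assms by (intro objective_values_eqI) (auto simp: feasible_def objective_def)

lemma objective_values_restrict:
  assumes "finite N" and "T \<subseteq> N" and "\<forall>j\<in>N. 0 \<in> X j"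
  shows "objective_values d g N X b T = objective_values d g T X b T"
proof (rule objective_values_eqI)
  have "finite T" using assms finite_subset by blast
  then have sums: "(\<Sum>j\<in>N. x j) = (\<Sum>j\<in>T. x j)" if "\<forall>j. j \<notin> T \<longrightarrow> x j = 0" for x
    using that assms by (intro sum.mono_neutral_right) auto
  show "feasible g N X T x y \<longleftrightarrow> feasible g T X T x y" for x y
  proof
    assume "feasible g N X T x y"
    then show "feasible g T X T x y"
      using sums[of x] assms(2) unfolding feasible_def by auto
  next
    assume feas: "feasible g T X T x y"
    then have "x j \<in> X j" if "j \<in> N" for j
      using that assms(3) unfolding feasible_def by (cases "j \<in> T") auto
    then show "feasible g N X T x y"
      using feas sums[of x] unfolding feasible_def by auto
  qed
  show "objective d N b T x y = objective d T b T x y" if "feasible g N X T x y" for x y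
    using sums[of x] that by (simp add: objective_def feasible_def)
qed

lemma objective_values_Diff_null:
  assumes "finite T" and "D \<subseteq> N" and "\<forall>j\<in>D. X j = {0} \<and> b j 0 = 0"
  shows "objective_values d g N X b T = objective_values d g N X b (T - D)"
proof (rule objective_values_eqI)
  show "feasible g N X T x y \<longleftrightarrow> feasible g N X (T - D) x y" for x y
    using assms(2,3) unfolding feasible_def by blast
  show "objective d N b T x y = objective d N b (T - D) x y" if "feasible g N X T x y" for x y
  proof -
    have "\<forall>j\<in>D. x j = 0" using that assms(2,3) unfolding feasible_def by blast
    then have "(\<Sum>j\<in>T. b j (x j)) = (\<Sum>j\<in>T - D. b j (x j))"
      using assms(1,3) by (intro sum.mono_neutral_right) auto
    then show ?thesis by (simp add: objective_def)
  qed
qed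

lemma objective_values_mono:
  assumes "finite T" and "T' \<subseteq> T" and "\<forall>j\<in>T - T'. b j 0 = 0"
  shows "objective_values d g N X b T' \<subseteq> objective_values d g N X b T"
proof
  fix v assume "v \<in> objective_values d g N X b T'"
  then obtain x y where feas: "feasible g N X T' x y" and v: "v = objective d N b T' x y"
    unfolding objective_values_def by blast
  have "(\<Sum>j\<in>T. b j (x j)) = (\<Sum>j\<in>T'. b j (x j))"
    using feas assms by (intro sum.mono_neutral_right) (auto simp: feasible_def)
  then have "v = objective d N b T x y" using v by (simp add: objective_def)
  moreover have "feasible g N X T x y" using feas assms(2) unfolding feasible_def by blast
  ultimately show "v \<in> objective_values d g N X b T"
    unfolding objective_values_def by blast
qed

lemma J_antimono:
  assumes "valid_profile N X b" and "finite N" and "T' \<subseteq> T" and "T \<subseteq> N"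
  shows "J d g N X b T \<le> J d g N X b T'"
proof -
  have "objective_values d g N X b T' \<subseteq> objective_values d g N X b T"
    using assms by (intro objective_values_mono) (auto simp: valid_profile_def finite_subset)
  then show ?thesis unfolding J_eq_Inf_objective_values by (intro Inf_superset_mono image_mono)
qed

lemma objective_values_relabel_subset:
  assumes "bij h"
  shows "objective_values d g N (X \<circ> h) (b \<circ> h) T \<subseteq> objective_values d g (h ` N) X b (h ` T)"
proof
  fix v assume "v \<in> objective_values d g N (X \<circ> h) (b \<circ> h) T"
  then obtain x y where feas: "feasible g N (X \<circ> h) T x y" and v: "v = objective d N (b \<circ> h) T x y"
    unfolding objective_values_def by blast
  define x' where "x' = x \<circ> inv h"
  have inj: "inj h" and x'h: "\<And>j. x' (h j) = x j"
    using assms by (auto simp: x'_def bij_def)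
  have sum_x': "(\<Sum>k\<in>h ` M. x' k) = (\<Sum>j\<in>M. x j)" for M
    using inj by (simp add: sum.reindex x'h inj_on_subset)
  have "feasible g (h ` N) X (h ` T) x' y"
    unfolding feasible_def
  proof (intro conjI ballI allI impI)
    show "x' k \<in> X k" if "k \<in> h ` N" for k
      using that feas x'h by (auto simp: feasible_def)
    show "x' k = 0" if "k \<notin> h ` T" for k
    proof -
      have "h (inv h k) = k" using assms by (simp add: bij_is_surj surj_f_inv_f)
      then have "inv h k \<notin> T" using that by force
      then show ?thesis using feas by (simp add: feasible_def x'_def)
    qed
    show "g (\<Sum>k\<in>h ` N. x' k) y $ i \<le> 0" for i
      using feas by (simp add: sum_x' feasible_def)
  qed
  moreover have "v = objective d (h ` N) b (h ` T) x' y"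
    using v inj by (simp add: objective_def sum_x' sum.reindex inj_on_subset x'h)
  ultimately show "v \<in> objective_values d g (h ` N) X b (h ` T)"
    unfolding objective_values_def by blast
qed

lemma objective_values_relabel:
  assumes "bij h"
  shows "objective_values d g (h ` N) X b (h ` T) = objective_values d g N (X \<circ> h) (b \<circ> h) T"
proof
  show "objective_values d g N (X \<circ> h) (b \<circ> h) T
      \<subseteq> objective_values d g (h ` N) X b (h ` T)"
    using assms by (rule objective_values_relabel_subset)
  have "h \<circ> inv h = id" using assms by (meson bij_is_surj surj_iff)
  moreover have "inv h ` h ` A = A" for A using assms by (simp add: bij_is_inj image_inv_f_f)
  moreover have "bij (inv h)" using assms by (rule bij_imp_bij_inv)
  note objective_values_relabel_subset[OF this, of d g "h ` N" "X \<circ> h" "b \<circ> h" "h ` T"]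
  ultimately show
    "objective_values d g (h ` N) X b (h ` T) \<subseteq> objective_values d g N (X \<circ> h) (b \<circ> h) T"
    by (simp add: comp_assoc)
qed

lemma wsm_const_inequality:
  assumes "wsm_const d g N \<gamma>" and "valid_profile N X b" and "all_attained d g N X b"
    and "K \<subseteq> N" and "T \<subseteq> N" and "J d g N X b (T - K) < \<infinity>"
  shows "ereal \<gamma> * (\<Sum>j\<in>K. J d g N X b (T - {j}) - J d g N X b T)
           \<le> J d g N X b (T - K) - J d g N X b T"
  using assms(1)[unfolded wsm_const_def, THEN conjunct2, rule_format, OF conjI[OF assms(2,3)]] assms(4-6)
  by blast

lemma J_eq_ereal_if_all_attained:
  assumes "all_attained d g N X b" and "T \<subseteq> N" and "J d g N X b T < \<infinity>"
  shows "J d g N X b T = ereal (real_of_ereal (J d g N X b T))"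
  using assms unfolding all_attained_def attained_def by (metis real_of_ereal.simps(1))

lemma sum_vcg_payment_le:
  assumes "wsm_const d g N \<gamma>" and "valid_profile N X b" and "all_attained d g N X b"
    and "standing d g N X b" and "K \<subseteq> N" and "J d g N X b (N - K) < \<infinity>"
  shows "(\<Sum>k\<in>K. vcg_payment d g N X b x k)
           \<le> (\<Sum>k\<in>K. b k (x k))
              + (real_of_ereal (J d g N X b (N - K)) - real_of_ereal (J d g N X b N)) / \<gamma>"
proof -
  define r where "r T = real_of_ereal (J d g N X b T)" for T
  have J_r: "J d g N X b T = ereal (r T)" if "T \<subseteq> N" "J d g N X b T < \<infinity>" for T
    using J_eq_ereal_if_all_attained[OF assms(3) that] unfolding r_def .
  have J_N: "J d g N X b N = ereal (r N)" and J_K: "J d g N X b (N - K) = ereal (r (N - K))"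
    using assms(4,6) J_r by (auto simp: standing_def)
  have J_k: "J d g N X b (N - {k}) = ereal (r (N - {k}))" if "k \<in> K" for k
    using that assms(4,5) J_r by (auto simp: standing_def)
  have "ereal \<gamma> * (\<Sum>k\<in>K. J d g N X b (N - {k}) - J d g N X b N)
      \<le> J d g N X b (N - K) - J d g N X b N"
    using assms(1-3,5,6) by (intro wsm_const_inequality) auto
  also have "(\<Sum>k\<in>K. J d g N X b (N - {k}) - J d g N X b N)
      = (\<Sum>k\<in>K. ereal (r (N - {k}) - r N))"
    by (rule sum.cong) (simp_all add: J_k J_N)
  also have "\<dots> = ereal (\<Sum>k\<in>K. r (N - {k}) - r N)"
    by (rule sum_ereal)
  finally have "\<gamma> * (\<Sum>k\<in>K. r (N - {k}) - r N) \<le> r (N - K) - r N"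
    by (simp add: J_K J_N)
  moreover have "0 < \<gamma>" using assms(1) by (simp add: wsm_const_def)
  ultimately have "(\<Sum>k\<in>K. r (N - {k}) - r N) \<le> (r (N - K) - r N) / \<gamma>"
    by (simp add: pos_le_divide_eq mult.commute)
  moreover have "(\<Sum>k\<in>K. vcg_payment d g N X b x k)
      = (\<Sum>k\<in>K. b k (x k)) + (\<Sum>k\<in>K. r (N - {k}) - r N)"
    unfolding sum.distrib[symmetric] by (rule sum.cong) (simp_all add: vcg_payment_def r_def)
  ultimately show ?thesis by (simp add: r_def)
qed

lemma J_Diff_singleton_le_if_wsm_const_gt_one:
  assumes "wsm_const d g N \<gamma>" and "1 < \<gamma>" and "valid_profile N X b" and "all_attained d g N X b"
    and "j \<in> N" and "J d g N X b (N - {j}) < \<infinity>"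
  shows "J d g N X b (N - {j}) \<le> J d g N X b N"
proof (cases "J d g N X b N = \<infinity>")
  case False
  define r1 r0 where "r1 = real_of_ereal (J d g N X b (N - {j}))" and "r0 = real_of_ereal (J d g N X b N)"
  have J1: "J d g N X b (N - {j}) = ereal r1" and J0: "J d g N X b N = ereal r0"
    using assms(4-6) False J_eq_ereal_if_all_attained[OF assms(4)] unfolding r1_def r0_def
    by (simp_all add: top.not_eq_extremum)
  have "ereal \<gamma> * (\<Sum>k\<in>{j}. J d g N X b (N - {k}) - J d g N X b N)
      \<le> J d g N X b (N - {j}) - J d g N X b N"
    using assms(1,3-6) by (intro wsm_const_inequality) auto
  then have "(\<gamma> - 1) * (r1 - r0) \<le> 0" by (simp add: J1 J0 algebra_simps)
  then have "r1 \<le> r0" using assms(2) by (simp add: mult_le_0_iff)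
  then show ?thesis by (simp add: J1 J0)
qed simp

locale shill_identities =
  fixes L S L' :: "'b set" and l :: 'b
  assumes finite_L: "finite L" and l_in_L: "l \<in> L" and finite_S: "finite S"
    and S_nonempty: "S \<noteq> {}" and S_disjoint: "S \<inter> L = {}"
    and L'_def: "L' = (L - {l}) \<union> S"
begin

lemma finite_L': "finite L'"
  using finite_L finite_S by (simp add: L'_def)

lemma S_subset_L': "S \<subseteq> L'"
  by (auto simp: L'_def)

lemma L'_Diff_S: "L' - S = L - {l}"
  using S_disjoint by (auto simp: L'_def)

lemma sum_L': "(\<Sum>j\<in>L'. f j) = (\<Sum>j\<in>L - {l}. f j) + (\<Sum>j\<in>S. f j)"
  unfolding L'_def using finite_L finite_S S_disjoint by (intro sum.union_disjoint) auto

definition merge_identities :: "('b \<Rightarrow> 'a::comm_monoid_add) \<Rightarrow> 'b \<Rightarrow> 'a" where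
  "merge_identities x = (\<lambda>j. if j \<in> S then 0 else x j)(l := \<Sum>k\<in>S. x k)"

lemma merge_identities_other: "j \<in> L - {l} \<Longrightarrow> merge_identities x j = x j"
  using S_disjoint by (auto simp: merge_identities_def)

lemma merge_identities_at_l: "merge_identities x l = (\<Sum>k\<in>S. x k)"
  by (simp add: merge_identities_def)

lemma sum_merge_identities:
  "(\<Sum>j\<in>L. f j (merge_identities x j)) = f l (\<Sum>k\<in>S. x k) + (\<Sum>j\<in>L - {l}. f j (x j))"
proof -
  have "(\<Sum>j\<in>L. f j (merge_identities x j))
      = f l (merge_identities x l) + (\<Sum>j\<in>L - {l}. f j (merge_identities x j))"
    by (rule sum.remove[OF finite_L l_in_L])
  then show ?thesis by (simp add: merge_identities_other merge_identities_at_l)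
qed

lemma feasible_merge_identities:
  assumes "\<forall>z. (\<forall>k\<in>S. z k \<in> X k) \<longrightarrow> (\<Sum>k\<in>S. z k) \<in> X l"
    and "feasible g L' X L' x y"
  shows "feasible g L X L (merge_identities x) y"
  unfolding feasible_def
proof (intro conjI ballI allI impI)
  show "merge_identities x j \<in> X j" if "j \<in> L" for j
  proof (cases "j = l")
    case True
    then show ?thesis using assms S_subset_L' by (auto simp: merge_identities_def feasible_def)
  next
    case False
    then show ?thesis using that assms(2) by (auto simp: merge_identities_other feasible_def L'_def)
  qed
  show "merge_identities x j = 0" if "j \<notin> L" for j
    using that l_in_L assms(2) by (auto simp: merge_identities_def feasible_def L'_def)
  show "g (\<Sum>j\<in>L. merge_identities x j) y $ i \<le> 0" for i
    using assms(2) sum_merge_identities[of "\<lambda>_ v. v" x] sum_L'[of x]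
    by (simp add: feasible_def add.commute)
qed

lemma J_merge_identities_le:
  assumes "\<forall>z. (\<forall>k\<in>S. z k \<in> X k) \<longrightarrow> (\<Sum>k\<in>S. z k) \<in> X l"
    and "feasible g L' X L' x y" and "\<forall>j\<in>L - {l}. c j = \<beta> j"
  shows "J d g L X c L
           \<le> ereal (objective d L' \<beta> L' x y - (\<Sum>k\<in>S. \<beta> k (x k)) + c l (\<Sum>k\<in>S. x k))"
proof -
  have "(\<Sum>j\<in>L - {l}. c j (x j)) = (\<Sum>j\<in>L - {l}. \<beta> j (x j))"
    using assms(3) by (intro sum.cong) auto
  then have "objective d L c L (merge_identities x) y
      = objective d L' \<beta> L' x y - (\<Sum>k\<in>S. \<beta> k (x k)) + c l (\<Sum>k\<in>S. x k)"
    using sum_merge_identities[of c x] sum_merge_identities[of "\<lambda>_ v. v" x]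
      sum_L'[of x] sum_L'[of "\<lambda>j. \<beta> j (x j)"]
    by (simp add: objective_def add.commute)
  then show ?thesis
    using J_le_objective[OF feasible_merge_identities[OF assms(1,2)], where d = d and b = c] by simp
qed

text \<open>Identity s stands in for l (through the transposition of l and s) and the other identities
  are null, with domain {0}.\<close>

definition stand_in_domains :: "'b \<Rightarrow> ('b \<Rightarrow> 'c::zero set) \<Rightarrow> 'b \<Rightarrow> 'c set" where
  "stand_in_domains s X j = (if j \<in> S - {s} then {0} else X (Transposition.transpose l s j))"

definition stand_in_bids :: "'b \<Rightarrow> ('b \<Rightarrow> 'c::zero \<Rightarrow> real) \<Rightarrow> 'b \<Rightarrow> 'c \<Rightarrow> real" where
  "stand_in_bids s b j = (if j \<in> S - {s} then (\<lambda>_. 0) else b (Transposition.transpose l s j))"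

lemma transpose_image_L:
  assumes "s \<in> S"
  shows "Transposition.transpose l s ` L = L' - (S - {s})"
proof -
  let ?\<tau> = "Transposition.transpose l s"
  have "s \<notin> L" using assms S_disjoint by blast
  then have "?\<tau> ` (L - {l}) = L - {l}" by force
  moreover have "L = insert l (L - {l})" using l_in_L by blast
  ultimately have "?\<tau> ` L = insert s (L - {l})" by (metis image_insert transpose_apply_first)
  then show ?thesis using assms S_disjoint by (auto simp: L'_def)
qed

lemma transpose_in_L:
  assumes "s \<in> S" and "j \<in> L'" and "j \<notin> S - {s}"
  shows "Transposition.transpose l s j \<in> L"
proof -
  have "j \<in> Transposition.transpose l s ` L" using assms transpose_image_L by simp
  then show ?thesis by (simp add: in_transpose_image_iff)
qed

lemma transpose_image_subset_L:
  assumes "s \<in> S" and "A \<subseteq> L"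
  shows "Transposition.transpose l s ` A \<subseteq> L' - (S - {s})"
  using assms transpose_image_L by blast

lemma objective_values_stand_in:
  assumes "s \<in> S" and "\<forall>j\<in>L. 0 \<in> X j" and "T \<subseteq> L'"
  shows "objective_values d g L' (stand_in_domains s X) (stand_in_bids s b) T
       = objective_values d g L X b (Transposition.transpose l s ` (T - (S - {s})))"
proof -
  let ?\<tau> = "Transposition.transpose l s" and ?D = "S - {s}"
  let ?X' = "stand_in_domains s X" and ?b' = "stand_in_bids s b"
  define A where "A = ?\<tau> ` (T - ?D)"
  have "T - ?D \<subseteq> ?\<tau> ` L" using assms(1,3) transpose_image_L by blast
  then have "A \<subseteq> ?\<tau> ` ?\<tau> ` L" unfolding A_def by (rule image_mono)
  then have A_L: "A \<subseteq> L" by (simp add: image_comp)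
  have T_A: "T - ?D = ?\<tau> ` A" by (simp add: A_def image_comp)
  have zero: "\<forall>j\<in>L'. 0 \<in> ?X' j"
    using assms(1,2) transpose_in_L by (simp add: stand_in_domains_def)
  have "objective_values d g L' ?X' ?b' T = objective_values d g L' ?X' ?b' (T - ?D)"
    using assms(3) S_subset_L' finite_L' finite_subset
    by (intro objective_values_Diff_null) (auto simp: stand_in_domains_def stand_in_bids_def)
  also have "\<dots> = objective_values d g (T - ?D) ?X' ?b' (T - ?D)"
    using assms(3) finite_L' zero by (intro objective_values_restrict) auto
  also have "\<dots> = objective_values d g A (?X' \<circ> ?\<tau>) (?b' \<circ> ?\<tau>) A"
    unfolding T_A by (rule objective_values_relabel) simp
  also have "\<dots> = objective_values d g A X b A"
    using T_A by (intro objective_values_cong)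
      (auto simp: stand_in_domains_def stand_in_bids_def image_iff)
  also have "\<dots> = objective_values d g L X b A"
    using A_L finite_L assms(2) by (intro objective_values_restrict[symmetric])
  finally show ?thesis unfolding A_def .
qed

lemma J_stand_in_image:
  assumes "s \<in> S" and "\<forall>j\<in>L. 0 \<in> X j" and "A \<subseteq> L"
  shows "J d g L' (stand_in_domains s X) (stand_in_bids s b) (Transposition.transpose l s ` A)
       = J d g L X b A"
proof -
  have sub: "Transposition.transpose l s ` A \<subseteq> L' - (S - {s})"
    using assms(1,3) by (rule transpose_image_subset_L)
  then have "Transposition.transpose l s ` A - (S - {s}) = Transposition.transpose l s ` A" by blast
  moreover have "Transposition.transpose l s ` A \<subseteq> L'" using sub by blast
  ultimately have "objective_values d g L' (stand_in_domains s X) (stand_in_bids s b)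
      (Transposition.transpose l s ` A) = objective_values d g L X b A"
    using objective_values_stand_in[OF assms(1,2), of "Transposition.transpose l s ` A"]
    by (simp add: image_comp)
  then show ?thesis by (simp add: J_eq_Inf_objective_values)
qed

lemma valid_profile_stand_in:
  assumes "s \<in> S" and "valid_profile L X b"
  shows "valid_profile L' (stand_in_domains s X) (stand_in_bids s b)"
  using assms transpose_in_L by (auto simp: valid_profile_def stand_in_domains_def stand_in_bids_def)

lemma all_attained_stand_in:
  assumes "s \<in> S" and "\<forall>j\<in>L. 0 \<in> X j" and "all_attained d g L X b"
  shows "all_attained d g L' (stand_in_domains s X) (stand_in_bids s b)"
  unfolding all_attained_def
proof (intro allI impI)
  fix T assume T: "T \<subseteq> L'"
  let ?A = "Transposition.transpose l s ` (T - (S - {s}))"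
  have "?A \<subseteq> L" using assms(1) T transpose_in_L by auto
  then have "attained d g L X b ?A" using assms(3) by (simp add: all_attained_def)
  moreover have "objective_values d g L' (stand_in_domains s X) (stand_in_bids s b) T
      = objective_values d g L X b ?A"
    by (rule objective_values_stand_in[OF assms(1,2) T])
  ultimately show "attained d g L' (stand_in_domains s X) (stand_in_bids s b) T"
    by (simp add: attained_iff_objective_values J_eq_Inf_objective_values)
qed

lemma sum_J_stand_in_image:
  fixes d g b
  assumes "s \<in> S" and "\<forall>j\<in>L. 0 \<in> X j" and "K \<subseteq> L" and "T \<subseteq> L"
  defines "\<tau> \<equiv> Transposition.transpose l s"
    and "J' \<equiv> J d g L' (stand_in_domains s X) (stand_in_bids s b)"
  shows "(\<Sum>k\<in>\<tau> ` K. J' (\<tau> ` T - {k}) - J' (\<tau> ` T))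
       = (\<Sum>j\<in>K. J d g L X b (T - {j}) - J d g L X b T)"
proof -
  have inj: "inj \<tau>" unfolding \<tau>_def by (rule inj_transpose)
  have "(\<Sum>k\<in>\<tau> ` K. J' (\<tau> ` T - {k}) - J' (\<tau> ` T))
      = (\<Sum>j\<in>K. J' (\<tau> ` T - {\<tau> j}) - J' (\<tau> ` T))"
    using inj by (simp add: sum.reindex inj_on_subset)
  also have "\<dots> = (\<Sum>j\<in>K. J d g L X b (T - {j}) - J d g L X b T)"
  proof (rule sum.cong)
    fix j assume "j \<in> K"
    have "\<tau> ` T - {\<tau> j} = \<tau> ` (T - {j})" using inj by (simp add: image_set_diff)
    moreover have "T - {j} \<subseteq> L" using assms(4) by blast
    ultimately show "J' (\<tau> ` T - {\<tau> j}) - J' (\<tau> ` T) = J d g L X b (T - {j}) - J d g L X b T"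
      using J_stand_in_image[OF assms(1,2)] assms(4) unfolding \<tau>_def J'_def by metis
  qed simp
  finally show ?thesis .
qed

lemma wsm_const_transfer_to_L:
  assumes "wsm_const d g L' \<gamma>"
  shows "wsm_const d g L \<gamma>"
  unfolding wsm_const_def
proof (intro conjI allI impI)
  show "0 < \<gamma>" using assms by (simp add: wsm_const_def)
  obtain s where s: "s \<in> S" using S_nonempty by blast
  let ?\<tau> = "Transposition.transpose l s"
  fix X b K T
  assume profile: "valid_profile L X b \<and> all_attained d g L X b"
    and KT: "K \<subseteq> L \<and> T \<subseteq> L \<and> J d g L X b (T - K) < \<infinity>"
  let ?J' = "J d g L' (stand_in_domains s X) (stand_in_bids s b)"
  have K: "K \<subseteq> L" and T: "T \<subseteq> L" using KT by auto
  have zero: "\<forall>j\<in>L. 0 \<in> X j" using profile by (simp add: valid_profile_def)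
  have "?\<tau> ` T - ?\<tau> ` K = ?\<tau> ` (T - K)" by (simp add: image_set_diff inj_transpose)
  moreover have "T - K \<subseteq> L" using KT by blast
  ultimately have J'_Diff: "?J' (?\<tau> ` T - ?\<tau> ` K) = J d g L X b (T - K)"
    using J_stand_in_image[OF s zero] by simp
  have "ereal \<gamma> * (\<Sum>k\<in>?\<tau> ` K. ?J' (?\<tau> ` T - {k}) - ?J' (?\<tau> ` T))
      \<le> ?J' (?\<tau> ` T - ?\<tau> ` K) - ?J' (?\<tau> ` T)"
    using assms profile KT J'_Diff transpose_image_subset_L[OF s]
      valid_profile_stand_in[OF s] all_attained_stand_in[OF s zero]
    by (intro wsm_const_inequality) auto
  then show "ereal \<gamma> * (\<Sum>j\<in>K. J d g L X b (T - {j}) - J d g L X b T)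
      \<le> J d g L X b (T - K) - J d g L X b T"
    unfolding J'_Diff sum_J_stand_in_image[OF s zero K T] unfolding J_stand_in_image[OF s zero T] .
qed

end

locale shill_market = shill_identities L S L' l
  for L S L' :: "'b set" and l :: 'b +
  fixes dbar :: "real^'t \<Rightarrow> real^'p \<Rightarrow> real"
    and gbar :: "real^'t \<Rightarrow> real^'p \<Rightarrow> real^'q"
    and Xh :: "'b \<Rightarrow> (real^'t) set"
    and c b bB b0 :: "'b \<Rightarrow> real^'t \<Rightarrow> real"
    and \<gamma> :: real
    and xB :: "'b \<Rightarrow> real^'t" and yB :: "real^'p"
  assumes bB_def: "bB = (\<lambda>j. if j \<in> S then b j else c j)"
    and b0_def: "b0 = (\<lambda>j. if j = l then (\<lambda>_. 0) else c j)"
    and valid_c: "valid_profile L Xh c"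
    and valid_b: "valid_profile S Xh b"
    and minkowski: "\<forall>z. (\<forall>k\<in>S. z k \<in> Xh k) \<longrightarrow> (\<Sum>k\<in>S. z k) \<in> Xh l"
    and standing_c: "standing dbar gbar L Xh c"
    and standing_bB: "standing dbar gbar L' Xh bB"
    and attained_c: "all_attained dbar gbar L Xh c"
    and attained_bB: "all_attained dbar gbar L' Xh bB"
    and attained_b0: "all_attained dbar gbar L Xh b0"
    and wsm: "wsm_const dbar gbar L' \<gamma>"
    and minimizer_bB: "is_minimizer dbar gbar L' Xh bB xB yB"
begin

lemma valid_bB: "valid_profile L' Xh bB"
  using valid_b valid_c by (auto simp: valid_profile_def bB_def L'_def)

lemma valid_b0: "valid_profile L Xh b0"
  using valid_c by (auto simp: valid_profile_def b0_def)

lemma J_bB_L'_Diff_S: "J dbar gbar L' Xh bB (L' - S) = J dbar gbar L Xh c (L - {l})"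
proof -
  have zero: "\<forall>j\<in>L. 0 \<in> Xh j" "\<forall>j\<in>L'. 0 \<in> Xh j"
    using valid_c valid_bB by (simp_all add: valid_profile_def)
  have "objective_values dbar gbar L' Xh bB (L - {l})
      = objective_values dbar gbar (L - {l}) Xh bB (L - {l})"
    using finite_L' zero by (intro objective_values_restrict) (auto simp: L'_def)
  also have "\<dots> = objective_values dbar gbar (L - {l}) Xh c (L - {l})"
    using S_disjoint by (intro objective_values_cong) (auto simp: bB_def)
  also have "\<dots> = objective_values dbar gbar L Xh c (L - {l})"
    using finite_L zero by (intro objective_values_restrict[symmetric]) auto
  finally show ?thesis by (simp add: J_eq_Inf_objective_values L'_Diff_S)
qed

lemma J_b0_Diff_l: "J dbar gbar L Xh b0 (L - {l}) = J dbar gbar L Xh c (L - {l})"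
  unfolding J_eq_Inf_objective_values by (subst objective_values_cong) (auto simp: b0_def)

lemma J_c_Diff_l_finite:
  "J dbar gbar L Xh c (L - {l}) = ereal (real_of_ereal (J dbar gbar L Xh c (L - {l})))"
  using attained_c standing_c l_in_L by (intro J_eq_ereal_if_all_attained) (auto simp: standing_def)

lemma J_bB_finite: "J dbar gbar L' Xh bB L' = ereal (real_of_ereal (J dbar gbar L' Xh bB L'))"
  using attained_bB standing_bB by (intro J_eq_ereal_if_all_attained) (auto simp: standing_def)

lemma J_c_finite: "J dbar gbar L Xh c L = ereal (real_of_ereal (J dbar gbar L Xh c L))"
  using attained_c standing_c by (intro J_eq_ereal_if_all_attained) (auto simp: standing_def)

lemma J_merge_identities_le_bB:
  assumes "\<forall>j\<in>L - {l}. c' j = bB j"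
  shows "J dbar gbar L Xh c' L
           \<le> ereal (real_of_ereal (J dbar gbar L' Xh bB L') - (\<Sum>k\<in>S. bB k (xB k)) + c' l (\<Sum>k\<in>S. xB k))"
proof -
  have feas: "feasible gbar L' Xh L' xB yB"
    and obj: "ereal (objective dbar L' bB L' xB yB) = J dbar gbar L' Xh bB L'"
    using minimizer_bB by (simp_all add: is_minimizer_def)
  from obj have "objective dbar L' bB L' xB yB = real_of_ereal (J dbar gbar L' Xh bB L')"
    by (metis real_of_ereal.simps(1))
  then show ?thesis using J_merge_identities_le[OF minkowski feas assms, where d = dbar] by simp
qed

lemma J_b0_le_J_bB: "J dbar gbar L Xh b0 L \<le> J dbar gbar L' Xh bB L'"
proof -
  have "xB k \<in> Xh k" if "k \<in> S" for k
    using that minimizer_bB S_subset_L' by (auto simp: is_minimizer_def feasible_def)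
  then have "0 \<le> (\<Sum>k\<in>S. bB k (xB k))"
    using valid_bB S_subset_L' by (intro sum_nonneg) (auto simp: valid_profile_def)
  moreover have "J dbar gbar L Xh b0 L
      \<le> ereal (real_of_ereal (J dbar gbar L' Xh bB L') - (\<Sum>k\<in>S. bB k (xB k)) + b0 l (\<Sum>k\<in>S. xB k))"
    using S_disjoint by (intro J_merge_identities_le_bB) (auto simp: b0_def bB_def)
  ultimately show ?thesis
    by (subst J_bB_finite) (auto simp: b0_def elim: order_trans)
qed

lemma J_b0_finite: "J dbar gbar L Xh b0 L = ereal (real_of_ereal (J dbar gbar L Xh b0 L))"
  using attained_b0 J_b0_le_J_bB J_bB_finite
  by (intro J_eq_ereal_if_all_attained) (auto simp: le_less_trans[of _ _ \<infinity>])

lemma J_bB_le_J_b0_if_gt_one: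
  assumes "1 < \<gamma>"
  shows "J dbar gbar L' Xh bB L' \<le> J dbar gbar L Xh b0 L"
proof -
  have "J dbar gbar L' Xh bB L' \<le> J dbar gbar L' Xh bB (L' - S)"
    using valid_bB finite_L' by (intro J_antimono) auto
  also have "\<dots> = J dbar gbar L Xh b0 (L - {l})"
    by (simp add: J_bB_L'_Diff_S J_b0_Diff_l)
  also have "\<dots> \<le> J dbar gbar L Xh b0 L"
    using wsm_const_transfer_to_L[OF wsm] assms valid_b0 attained_b0 l_in_L J_b0_Diff_l J_c_Diff_l_finite
    by (intro J_Diff_singleton_le_if_wsm_const_gt_one) auto
  finally show ?thesis .
qed

lemma shill_utility_le:
  "(\<Sum>k\<in>S. vcg_payment dbar gbar L' Xh bB xB k) - c l (\<Sum>k\<in>S. xB k)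
     \<le> (vcg_payment dbar gbar L Xh c xC l - c l (xC l))
        + (1 / \<gamma> - 1) * (real_of_ereal (J dbar gbar L Xh c (L - {l}))
                           - real_of_ereal (J dbar gbar L' Xh bB L'))"
proof -
  define rCl rC oB where "rCl = real_of_ereal (J dbar gbar L Xh c (L - {l}))"
    and "rC = real_of_ereal (J dbar gbar L Xh c L)" and "oB = real_of_ereal (J dbar gbar L' Xh bB L')"
  have "J dbar gbar L' Xh bB (L' - S) = ereal rCl"
    unfolding rCl_def J_bB_L'_Diff_S by (rule J_c_Diff_l_finite)
  then have payments: "(\<Sum>k\<in>S. vcg_payment dbar gbar L' Xh bB xB k)
      \<le> (\<Sum>k\<in>S. bB k (xB k)) + (rCl - oB) / \<gamma>"
    using sum_vcg_payment_le[OF wsm valid_bB attained_bB standing_bB S_subset_L'] by (simp add: oB_def)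
  have "\<forall>j\<in>L - {l}. c j = bB j" using S_disjoint by (auto simp: bB_def)
  from J_merge_identities_le_bB[OF this]
  have "rC \<le> oB - (\<Sum>k\<in>S. bB k (xB k)) + c l (\<Sum>k\<in>S. xB k)"
    using J_c_finite unfolding rC_def oB_def by (metis ereal_less_eq(3))
  moreover have "vcg_payment dbar gbar L Xh c xC l - c l (xC l) = rCl - rC"
    by (simp add: vcg_payment_def rCl_def rC_def)
  moreover have "(1 / \<gamma> - 1) * (rCl - oB) = (rCl - oB) / \<gamma> - (rCl - oB)"
    by (simp add: algebra_simps)
  ultimately show ?thesis using payments by (simp add: rCl_def oB_def)
qed

lemma shill_bound_le_null_bound:
  "(1 / \<gamma> - 1) * (real_of_ereal (J dbar gbar L Xh c (L - {l}))
                     - real_of_ereal (J dbar gbar L' Xh bB L'))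
     \<le> (1 / \<gamma> - 1) * (real_of_ereal (J dbar gbar L Xh c (L - {l}))
                        - real_of_ereal (J dbar gbar L Xh b0 L))"
proof (cases "\<gamma> \<le> 1")
  case True
  have "real_of_ereal (J dbar gbar L Xh b0 L) \<le> real_of_ereal (J dbar gbar L' Xh bB L')"
    using J_b0_le_J_bB J_b0_finite J_bB_finite by (metis ereal_less_eq(3))
  moreover have "0 \<le> 1 / \<gamma> - 1" using True wsm by (simp add: wsm_const_def)
  ultimately show ?thesis by (intro mult_left_mono) auto
next
  case False
  have "real_of_ereal (J dbar gbar L' Xh bB L') \<le> real_of_ereal (J dbar gbar L Xh b0 L)"
    using J_bB_le_J_b0_if_gt_one False J_b0_finite J_bB_finite by (metis ereal_less_eq(3) not_le)
  moreover have "1 / \<gamma> - 1 \<le> 0" using False by simp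
  ultimately show ?thesis by (intro mult_left_mono_neg) auto
qed

end

theorem theorem1:
  fixes dbar :: "real^'t \<Rightarrow> real^'p \<Rightarrow> real"
    and gbar :: "real^'t \<Rightarrow> real^'p \<Rightarrow> real^'q"
    and L S :: "'b set" and l :: 'b
    and Xh :: "'b \<Rightarrow> (real^'t) set"
    and c b :: "'b \<Rightarrow> real^'t \<Rightarrow> real"
    and \<gamma> :: real
    and xC xB :: "'b \<Rightarrow> real^'t" and yC yB :: "real^'p"
  defines "L' \<equiv> (L - {l}) \<union> S"
    and "bB \<equiv> (\<lambda>j. if j \<in> S then b j else c j)"
    and "b0 \<equiv> (\<lambda>j. if j = l then (\<lambda>_. 0) else c j)"
  assumes "finite L" and "l \<in> L" and "finite S" and "S \<noteq> {}" and "S \<inter> L = {}"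
    and "valid_profile L Xh c"
    and "valid_profile S Xh b"
    and "\<forall>z. (\<forall>k\<in>S. z k \<in> Xh k) \<longrightarrow> (\<Sum>k\<in>S. z k) \<in> Xh l"
    and "standing dbar gbar L Xh c"
    and "standing dbar gbar L' Xh bB"
    and "all_attained dbar gbar L Xh c"
    and "all_attained dbar gbar L' Xh bB"
    and "all_attained dbar gbar L Xh b0"
    and "wsm_const dbar gbar L' \<gamma>"
    and "is_minimizer dbar gbar L Xh c xC yC"
    and "is_minimizer dbar gbar L' Xh bB xB yB"
  shows "(\<Sum>k\<in>S. vcg_payment dbar gbar L' Xh bB xB k) - c l (\<Sum>k\<in>S. xB k)
           \<le> (vcg_payment dbar gbar L Xh c xC l - c l (xC l))
              + (1 / \<gamma> - 1) * (real_of_ereal (J dbar gbar L Xh c (L - {l}))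
                                 - real_of_ereal (J dbar gbar L' Xh bB L'))
       \<and> (vcg_payment dbar gbar L Xh c xC l - c l (xC l))
              + (1 / \<gamma> - 1) * (real_of_ereal (J dbar gbar L Xh c (L - {l}))
                                 - real_of_ereal (J dbar gbar L' Xh bB L'))
           \<le> (vcg_payment dbar gbar L Xh c xC l - c l (xC l))
              + (1 / \<gamma> - 1) * (real_of_ereal (J dbar gbar L Xh c (L - {l}))
                                 - real_of_ereal (J dbar gbar L Xh b0 L))"
proof -
  interpret shill_market L S L' l dbar gbar Xh c b bB b0 \<gamma> xB yB
    using assms by unfold_locales (simp_all add: L'_def bB_def b0_def)
  show ?thesis using shill_utility_le shill_bound_le_null_bound by simp
qed

end
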